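(* Assume the setting of the context (in particular $\zeta\in[\tfrac12,1]$ and $q_r\in Q_{\mathrm{ad},r}$), and let $\bm u_h=(\bm u_h^k)_k$ and $\bm u_r=(\bm u_r^k)_k$ be the full-order and reduced solutions for $q_r$. Define $$J_h(q_r)=\frac{\Delta t}{2}\sum_{k=1}^K\|\mathcal C_hu_h^k-y_h^{\delta,k}\|_{C_h}^2,\qquad J_r(q_r)=\frac{\Delta t}{2}\sum_{k=1}^K\|\mathcal C_h u_r^k-y_h^{\delta,k}\|_{C_h}^2,$$ where $u_r^k\in V_h$ has coefficient vector $\bm\Psi_V\bm u_r^k$. Let $\bm e^k=\bm u_h^k-\bm\Psi_V\bm u_r^k$, $$\tilde\Delta^u(q_r)=\Big(\Delta t\sum_{k=1}^K(\bm e^k)^\top\bm A_h(q_r)\bm e^k\Big)^{1/2},\qquad a_{q_r}=\frac{\tilde\kappa}{C_P^2}>0,$$ with $C_P>0$ the Poincaré constant of $V$ and $\tilde\kappa$ as in the context. Then $$|J_h(q_r)-J_r(q_r)|\le \frac{\|\mathcal C\|^2_{\mathcal L(V,C)}}{2a_{q_r}}\tilde\Delta^u(q_r)^2+\|\mathcal C\|_{\mathcal L(V,C)}\Big(\frac{2J_r(q_r)}{a_{q_r}}\Big)^{1/2}\tilde\Delta^u(q_r).$$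
   Context: Setting: $\Omega\subset\mathbb{R}^3$ bounded Lipschitz, $\Gamma\subset\partial\Omega$ relatively open of positive measure, $V=H^1_\Gamma(\Omega;\mathbb{R}^3)=\{v\in H^1(\Omega;\mathbb{R}^3):v|_\Gamma=0\}$, $H=L^2(\Omega;\mathbb{R}^3)$, constant density $\rho>0$. Stored energy $C_q(\bm x,Y)=C_0(\bm x,Y)+\sum_{p=1}^{N_Q}q_pC_p(\bm x,Y)$, $C_q\in\mathcal C^4$, $Y\mapsto\nabla_YC_q$ linear, major symmetry of second $Y$-derivatives, and $\kappa_p\|Y\|_F^2\le\nabla_YC_p(\bm x,Y):Y\le\mu_p\|Y\|_F^2$ for symmetric $Y$, with $\kappa_p,\mu_p>0$. The admissible set $\mathscr Q_{\mathrm{ad}}$ is a closed convex subset of $\{q\in\mathbb{R}^{N_Q}:q_p>0,\ q^\top\kappa\ge\tilde\kappa,\ q^\top\mu\le\tilde\mu\}$ with fixed $\tilde\kappa,\tilde\mu>0$. $A(q):V\to V'$, $\langle A(q)u,v\rangle=\int_\Omega\nabla_YC_q(\bm x,Ju):Jv\,d\bm x$. Observation: $C$ is a real Hilbert space, $\mathcal C\in\mathcal L(V,C)$ injective, applied pointwise in time; $C_h=\operatorname{span}\{c_1,\dots,c_{N_C}\}\subset C$ with Gram matrix $\bm M_C$; $\mathcal C_h:V_h\to C_h$ maps $v_h$ to the element with coefficients $\bm M_C^{-1}(\langle\mathcal Cv_h,c_j\rangle_C)_j$; data $y^\delta\in L^2(0,T;C)$ and $y_h^{\delta,k}\in C_h$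 has coefficients $\bm M_C^{-1}(\langle y^\delta(t^k),c_j\rangle_C)_j$. Discretization: $V_h=\operatorname{span}\{\varphi_i\}\subset V$, $\bm M_H,\bm M_V$ its $H$- and $V$-Gram matrices, $\bm A_h(q)=(\langle A(q)\varphi_j,\varphi_i\rangle)_{i,j}$, $\bm L_h^k=(\langle l(t^k),\varphi_j\rangle)_j$, $\bm R^{k-1+\zeta}_{1,h}=\zeta\bm L_h^k+(1-\zeta)\bm L_h^{k-1}$, $\Delta t=T/K$. Full-order solution for $q_r$: for $k=1,\dots,K$, $\tfrac1{\Delta t}\rho\bm M_H(\dot{\bm u}_h^k-\dot{\bm u}_h^{k-1})+\bm A_h(q_r)(\zeta\bm u_h^k+(1-\zeta)\bm u_h^{k-1})=\bm R^{k-1+\zeta}_{1,h}$ and $\tfrac1{\Delta t}\rho\bm M_H(\bm u_h^k-\bm u_h^{k-1})=\rho\bm M_H(\zeta\dot{\bm u}_h^k+(1-\zeta)\dot{\bm u}_h^{k-1})$, with $\bm u_h^0=((u_0,\varphi_j)_V)_j$, $\dot{\bm u}_h^0=((u_1,\varphi_j)_V)_j$. Reduced spaces: $\bm\Psi_V\in\mathbb{R}^{N_V\times n_V}$ with $\bm\Psi_V^\top\bm M_V\bm\Psi_V=I$, $\bm\Psi_Q$ a reduced parameter basis orthonormal in $\bm M_Q$; $Q_{\mathrm{ad},r}=\{\bm q_r:\bm\Psi_Q\bm q_r\in\mathscr Q_{\mathrm{ad}}\}$, reduced parameters enter full-order matrices as $\bm\Psi_Q\bm q_r$. Reduced solution: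 the same scheme with $\bm M_H,\bm A_h(q_r),\bm R_{1,h}$ replaced by $\bm\Psi_V^\top\bm M_H\bm\Psi_V$, $\bm\Psi_V^\top\bm A_h(q_r)\bm\Psi_V$, $\bm\Psi_V^\top\bm R_{1,h}$, with initial values $\bm\Psi_V^\top\bm u_h^0$, $\bm\Psi_V^\top\dot{\bm u}_h^0$. *)

theory Defs
  imports "HOL-Analysis.Analysis"
begin

definition coef_to_elem :: "('n::finite \<Rightarrow> 'v::real_vector) \<Rightarrow> real^'n \<Rightarrow> 'v" where
  "coef_to_elem b x = (\<Sum>i\<in>UNIV. (x $ i) *\<^sub>R b i)"

definition gram :: "('n::finite \<Rightarrow> 'v::real_inner) \<Rightarrow> real^'n^'n" where
  "gram b = (\<chi> i j. inner (b j) (b i))"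

definition obs_h :: "('m::finite \<Rightarrow> 'c::real_inner) \<Rightarrow> 'c \<Rightarrow> 'c" where
  "obs_h c w = coef_to_elem c (matrix_inv (gram c) *v (\<chi> j. inner w (c j)))"

definition A_of :: "('v \<Rightarrow> 'v \<Rightarrow> real) \<Rightarrow> ('p::finite \<Rightarrow> 'v \<Rightarrow> 'v \<Rightarrow> real)
                     \<Rightarrow> real^'p \<Rightarrow> 'v \<Rightarrow> 'v \<Rightarrow> real" where
  "A_of A0 Ap q u v = A0 u v + (\<Sum>p\<in>UNIV. q $ p * Ap p u v)"

definition stiff :: "('v \<Rightarrow> 'v \<Rightarrow> real) \<Rightarrow> ('n::finite \<Rightarrow> 'v) \<Rightarrow> real^'n^'n" where
  "stiff a phi = (\<chi> i j. a (phi j) (phi i))"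

definition scheme_solution ::
  "real^'n^'n \<Rightarrow> real^'n^'n \<Rightarrow> (nat \<Rightarrow> real^'n) \<Rightarrow> real \<Rightarrow> real \<Rightarrow> real \<Rightarrow> nat
   \<Rightarrow> real^'n \<Rightarrow> real^'n \<Rightarrow> (nat \<Rightarrow> real^'n) \<Rightarrow> (nat \<Rightarrow> real^'n) \<Rightarrow> bool" where
  "scheme_solution M A L \<zeta> \<rho> dt K u0 u1 u ud \<longleftrightarrow>
     u 0 = u0 \<and> ud 0 = u1 \<and>
     (\<forall>k\<in>{1..K}.
        (1/dt) *\<^sub>R (\<rho> *\<^sub>R (M *v (ud k - ud (k-1))))
          + A *v (\<zeta> *\<^sub>R u k + (1-\<zeta>) *\<^sub>R u (k-1))
          = \<zeta> *\<^sub>R L k + (1-\<zeta>) *\<^sub>R L (k-1)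
      \<and> (1/dt) *\<^sub>R (\<rho> *\<^sub>R (M *v (u k - u (k-1))))
          = \<rho> *\<^sub>R (M *v (\<zeta> *\<^sub>R ud k + (1-\<zeta>) *\<^sub>R ud (k-1))))"

end

theory Submission
  imports Defs
begin

(* The bound is a pure perturbation estimate: it holds for any two coefficient sequences.
   At step k the residuals of J_h and J_r differ by the observed error C_h C e^k.
   C_h is the orthogonal projection onto C_h, hence non-expansive, and the parameter
   bounds together with the Poincare inequality make A(q_r) coercive with constant
   a = kappa~ / C_P^2, so that |C_h C e^k|^2 <= |C|^2 / a * (e^k)^T A_h e^k.
   Summing |x|^2 - |y|^2 <= |x - y|^2 + 2 |y| |x - y| over k and applying Cauchy-Schwarz
   to the mixed term gives the claim. *)

lemma bounded_bilinear_imp_bilinear: "bounded_bilinear h \<Longrightarrow> bilinear h"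
  unfolding bilinear_def
  by (simp add: bounded_bilinear.bounded_linear_left bounded_bilinear.bounded_linear_right
      bounded_linear.linear)

lemma linear_coef_to_elem: "linear (coef_to_elem b)"
  by (rule linearI)
    (simp_all add: coef_to_elem_def scaleR_add_left sum.distrib scaleR_sum_right)

lemma linear_obs_h: "linear (obs_h c)"
proof -
  have "linear (\<lambda>w. \<chi> j. inner w (c j))"
    by (rule linearI) (simp_all add: vec_eq_iff inner_add_left)
  then have "linear (coef_to_elem c \<circ> (*v) (matrix_inv (gram c)) \<circ> (\<lambda>w. \<chi> j. inner w (c j)))"
    by (intro linear_compose linear_coef_to_elem matrix_vector_mul_linear)
  then show ?thesis
    by (simp add: obs_h_def[abs_def] o_def)
qed

lemma stiff_quadratic_form:
  fixes \<phi> :: "'n::finite \<Rightarrow> 'v::real_vector"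
  assumes "bilinear a"
  shows "e \<bullet> (stiff a \<phi> *v e) = a (coef_to_elem \<phi> e) (coef_to_elem \<phi> e)"
proof -
  have "a (coef_to_elem \<phi> e) (coef_to_elem \<phi> e)
      = (\<Sum>j\<in>UNIV. \<Sum>i\<in>UNIV. e $ i * (a (\<phi> j) (\<phi> i) * e $ j))"
    unfolding coef_to_elem_def bilinear_sum[OF assms] sum.cartesian_product[symmetric]
    by (simp add: bilinear_lmul[OF assms] bilinear_rmul[OF assms] mult_ac)
  also have "\<dots> = (\<Sum>i\<in>UNIV. \<Sum>j\<in>UNIV. e $ i * (a (\<phi> j) (\<phi> i) * e $ j))"
    by (rule sum.swap)
  also have "\<dots> = e \<bullet> (stiff a \<phi> *v e)"
    by (simp add: inner_vec_def stiff_def matrix_vector_mult_def sum_distrib_left)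
  finally show ?thesis ..
qed

lemma gram_quadratic_form:
  fixes c :: "'n::finite \<Rightarrow> 'c::real_inner"
  shows "x \<bullet> (gram c *v x) = (norm (coef_to_elem c x))\<^sup>2"
proof -
  have "gram c = stiff inner c"
    by (simp add: gram_def stiff_def)
  then show ?thesis
    by (simp add: stiff_quadratic_form bounded_bilinear_imp_bilinear[OF bounded_bilinear_inner]
        power2_norm_eq_inner)
qed

lemma coef_to_elem_eq_0_imp:
  assumes "inj b" "independent (range b)" "coef_to_elem b x = 0"
  shows "x = 0"
proof -
  have "(\<Sum>v\<in>range b. x $ inv b v *\<^sub>R v) = coef_to_elem b x"
    using assms(1) by (simp add: sum.reindex coef_to_elem_def)
  then have "\<forall>v\<in>range b. x $ inv b v = 0"
    using assms(2,3) dependent_finite[of "range b"] by auto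
  then show ?thesis
    using assms(1) by (simp add: vec_eq_iff)
qed

lemma invertible_gram:
  fixes c :: "'n::finite \<Rightarrow> 'c::real_inner"
  assumes "inj c" "independent (range c)"
  shows "invertible (gram c)"
proof -
  have "x = 0" if "gram c *v x = 0" for x
    using gram_quadratic_form[of x c] that coef_to_elem_eq_0_imp[OF assms] by simp
  then show ?thesis
    using matrix_left_invertible_ker invertible_left_inverse by blast
qed

lemma matrix_inv_right:
  "invertible A \<Longrightarrow> A ** matrix_inv A = mat 1"
  unfolding invertible_def matrix_inv_def by (rule someI_ex[THEN conjunct1])

lemma inner_obs_h_basis:
  fixes c :: "'n::finite \<Rightarrow> 'c::real_inner"
  assumes "inj c" "independent (range c)"
  shows "inner (obs_h c w) (c j) = inner w (c j)"
proof -
  define x where "x = matrix_inv (gram c) *v (\<chi> j. inner w (c j))"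
  have "inner (obs_h c w) (c j) = (gram c *v x) $ j"
    by (simp add: obs_h_def x_def coef_to_elem_def gram_def matrix_vector_mult_def
        inner_sum_left mult.commute)
  also have "\<dots> = inner w (c j)"
    by (simp add: x_def matrix_vector_mul_assoc matrix_inv_right[OF invertible_gram[OF assms]])
  finally show ?thesis .
qed

lemma norm_obs_h_le:
  fixes c :: "'n::finite \<Rightarrow> 'c::real_inner"
  assumes "inj c" "independent (range c)"
  shows "norm (obs_h c w) \<le> norm w"
proof -
  obtain x where obs_eq: "obs_h c w = coef_to_elem c x"
    unfolding obs_h_def by blast
  have "inner (w - obs_h c w) (obs_h c w) = 0"
    using inner_obs_h_basis[OF assms]
    by (subst (2) obs_eq) (simp add: coef_to_elem_def inner_sum_right inner_diff_left)
  then have "(norm w)\<^sup>2 = (norm (obs_h c w))\<^sup>2 + (norm (w - obs_h c w))\<^sup>2"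
    using norm_add_Pythagorean[of "obs_h c w" "w - obs_h c w"]
    by (simp add: orthogonal_def inner_commute)
  then show ?thesis
    by (metis le_add_same_cancel1 norm_ge_zero power2_le_iff_abs_le zero_le_power2 abs_of_nonneg)
qed

lemma abs_norm_sq_diff_le:
  fixes a b :: "'a::real_inner"
  shows "\<bar>(norm a)\<^sup>2 - (norm b)\<^sup>2\<bar> \<le> (norm (a - b))\<^sup>2 + 2 * norm b * norm (a - b)"
proof -
  define d where "d = a - b"
  have "(norm a)\<^sup>2 - (norm b)\<^sup>2 = 2 * inner b d + (norm d)\<^sup>2"
    by (simp add: d_def power2_norm_eq_inner inner_diff_left inner_diff_right inner_commute)
  moreover have "\<bar>inner b d\<bar> \<le> norm b * norm d"
    by (rule Cauchy_Schwarz_ineq2)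
  ultimately show ?thesis
    using zero_le_power2[of "norm d"] unfolding d_def abs_le_iff by linarith
qed

lemma abs_sum_norm_sq_diff_le:
  fixes A B :: "'i \<Rightarrow> 'a::real_inner"
  shows "\<bar>(\<Sum>k\<in>S. (norm (A k))\<^sup>2) - (\<Sum>k\<in>S. (norm (B k))\<^sup>2)\<bar>
     \<le> (\<Sum>k\<in>S. (norm (A k - B k))\<^sup>2)
        + 2 * sqrt (\<Sum>k\<in>S. (norm (B k))\<^sup>2) * sqrt (\<Sum>k\<in>S. (norm (A k - B k))\<^sup>2)"
proof -
  have "\<bar>(\<Sum>k\<in>S. (norm (A k))\<^sup>2) - (\<Sum>k\<in>S. (norm (B k))\<^sup>2)\<bar>
      \<le> (\<Sum>k\<in>S. \<bar>(norm (A k))\<^sup>2 - (norm (B k))\<^sup>2\<bar>)"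
    by (simp only: sum_subtractf[symmetric] sum_abs)
  also have "\<dots> \<le> (\<Sum>k\<in>S. (norm (A k - B k))\<^sup>2 + 2 * (norm (B k) * norm (A k - B k)))"
    by (intro sum_mono) (simp add: abs_norm_sq_diff_le mult.assoc[symmetric])
  also have "(\<Sum>k\<in>S. norm (B k) * norm (A k - B k))
      \<le> sqrt (\<Sum>k\<in>S. (norm (B k))\<^sup>2) * sqrt (\<Sum>k\<in>S. (norm (A k - B k))\<^sup>2)"
    using L2_set_mult_ineq[of "\<lambda>k. norm (B k)" "\<lambda>k. norm (A k - B k)" S]
    by (simp add: L2_set_def)
  ultimately show ?thesis
    by (simp add: sum.distrib sum_distrib_left[symmetric])
qed

lemma discrete_misfit_diff_le:
  fixes A B :: "'i \<Rightarrow> 'a::real_inner"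
  assumes dt: "0 < dt" and a: "0 < a" and C: "0 \<le> C"
    and diff_le: "\<And>k. k \<in> S \<Longrightarrow> (norm (A k - B k))\<^sup>2 \<le> C\<^sup>2 / a * Q k"
    and Q_nonneg: "\<And>k. k \<in> S \<Longrightarrow> 0 \<le> Q k"
  shows "\<bar>dt / 2 * (\<Sum>k\<in>S. (norm (A k))\<^sup>2) - dt / 2 * (\<Sum>k\<in>S. (norm (B k))\<^sup>2)\<bar>
     \<le> C\<^sup>2 / (2 * a) * (sqrt (dt * (\<Sum>k\<in>S. Q k)))\<^sup>2
        + C * sqrt (2 * (dt / 2 * (\<Sum>k\<in>S. (norm (B k))\<^sup>2)) / a) * sqrt (dt * (\<Sum>k\<in>S. Q k))"
proof -
  define SA where "SA = (\<Sum>k\<in>S. (norm (A k))\<^sup>2)"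
  define SB where "SB = (\<Sum>k\<in>S. (norm (B k))\<^sup>2)"
  define SD where "SD = (\<Sum>k\<in>S. (norm (A k - B k))\<^sup>2)"
  define SQ where "SQ = (\<Sum>k\<in>S. Q k)"
  have "0 \<le> SB" "0 \<le> SQ"
    by (simp_all add: SB_def SQ_def sum_nonneg Q_nonneg)
  have SD_le: "SD \<le> C\<^sup>2 / a * SQ"
    unfolding SD_def SQ_def sum_distrib_left by (intro sum_mono diff_le)
  then have "sqrt SD \<le> C * sqrt SQ / sqrt a"
    using C a \<open>0 \<le> SQ\<close> real_sqrt_le_mono by (fastforce simp: real_sqrt_mult real_sqrt_divide)
  then have "sqrt SB * sqrt SD \<le> sqrt SB * (C * sqrt SQ / sqrt a)"
    using \<open>0 \<le> SB\<close> by (intro mult_left_mono) simp_all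
  have "\<bar>dt / 2 * SA - dt / 2 * SB\<bar> = dt / 2 * \<bar>SA - SB\<bar>"
    using dt by (simp only: right_diff_distrib[symmetric] abs_mult abs_of_pos half_gt_zero)
  also have "\<dots> \<le> dt / 2 * (SD + 2 * sqrt SB * sqrt SD)"
    using abs_sum_norm_sq_diff_le[of A S B] dt
    by (intro mult_left_mono) (simp_all add: SA_def SB_def SD_def)
  also have "\<dots> \<le> dt / 2 * (C\<^sup>2 / a * SQ + 2 * sqrt SB * (C * sqrt SQ / sqrt a))"
    using SD_le \<open>sqrt SB * sqrt SD \<le> _\<close> dt by (intro mult_left_mono) simp_all
  also have "\<dots> = C\<^sup>2 / (2 * a) * (sqrt (dt * SQ))\<^sup>2 + C * sqrt (2 * (dt / 2 * SB) / a) * sqrt (dt * SQ)"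
    using dt a \<open>0 \<le> SQ\<close> by (simp add: real_sqrt_mult real_sqrt_divide field_simps)
  finally show ?thesis
    unfolding SA_def SB_def SQ_def .
qed

lemma bilinear_A_of:
  assumes A0: "bounded_bilinear A0" and Ap: "\<And>p. bounded_bilinear (Ap p)"
  shows "bilinear (A_of A0 Ap q)"
proof -
  note bil = bounded_bilinear_imp_bilinear[OF A0] bounded_bilinear_imp_bilinear[OF Ap]
  show ?thesis
    unfolding bilinear_def linear_iff A_of_def
    by (simp add: bilinear_ladd[OF bil(1)] bilinear_radd[OF bil(1)] bilinear_lmul[OF bil(1)]
        bilinear_rmul[OF bil(1)] bilinear_ladd[OF bil(2)] bilinear_radd[OF bil(2)]
        bilinear_lmul[OF bil(2)] bilinear_rmul[OF bil(2)]
        sum.distrib sum_distrib_left algebra_simps)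
qed

lemma A_of_coercive:
  fixes Jop :: "'v::real_normed_vector \<Rightarrow> 'l::real_normed_vector"
  assumes A0_nonneg: "0 \<le> A0 v v"
    and Ap_lower: "\<And>p. \<kappa> $ p * (norm (Jop v))\<^sup>2 \<le> Ap p v v"
    and q_nonneg: "\<And>p. 0 \<le> q $ p" and q_\<kappa>: "\<kappa>t \<le> q \<bullet> \<kappa>" and "0 \<le> \<kappa>t"
    and "0 < CP" and poincare: "norm v \<le> CP * norm (Jop v)"
  shows "\<kappa>t / CP\<^sup>2 * (norm v)\<^sup>2 \<le> A_of A0 Ap q v v"
proof -
  have "\<kappa>t / CP\<^sup>2 * (norm v)\<^sup>2 \<le> \<kappa>t / CP\<^sup>2 * (CP * norm (Jop v))\<^sup>2"
    using poincare \<open>0 \<le> \<kappa>t\<close> by (intro mult_left_mono power_mono) simp_all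
  also have "\<dots> = \<kappa>t * (norm (Jop v))\<^sup>2"
    using \<open>0 < CP\<close> by (simp add: power_mult_distrib)
  also have "\<dots> \<le> (q \<bullet> \<kappa>) * (norm (Jop v))\<^sup>2"
    using q_\<kappa> by (intro mult_right_mono) simp_all
  also have "\<dots> = (\<Sum>p\<in>UNIV. q $ p * (\<kappa> $ p * (norm (Jop v))\<^sup>2))"
    unfolding inner_vec_def sum_distrib_right by (simp add: mult_ac)
  also have "\<dots> \<le> (\<Sum>p\<in>UNIV. q $ p * Ap p v v)"
    using q_nonneg Ap_lower by (intro sum_mono mult_left_mono)
  also have "\<dots> \<le> A_of A0 Ap q v v"
    using A0_nonneg by (simp add: A_of_def)
  finally show ?thesis .
qed

lemma obs_h_energy_estimate:
  fixes c :: "'n::finite \<Rightarrow> 'c::real_inner"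
  assumes "inj c" "independent (range c)" "bounded_linear Cop"
    and "0 < a" and coercive: "a * (norm w)\<^sup>2 \<le> E"
  shows "(norm (obs_h c (Cop w)))\<^sup>2 \<le> (onorm Cop)\<^sup>2 / a * E"
proof -
  have "norm (obs_h c (Cop w)) \<le> onorm Cop * norm w"
    using norm_obs_h_le[OF assms(1,2)] onorm[OF assms(3)] order_trans by blast
  then have "(norm (obs_h c (Cop w)))\<^sup>2 \<le> (onorm Cop)\<^sup>2 * (norm w)\<^sup>2"
    by (metis norm_ge_zero power_mono power_mult_distrib)
  also have "\<dots> \<le> (onorm Cop)\<^sup>2 * (E / a)"
    using coercive \<open>0 < a\<close> by (intro mult_left_mono) (simp_all add: pos_le_divide_eq mult.commute)
  finally show ?thesis
    by simp
qed

theorem theorem3p2: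
  fixes \<iota> :: "'v::{real_inner,complete_space} \<Rightarrow> 'h::{real_inner,complete_space}"
    and Jop :: "'v \<Rightarrow> 'l::{real_inner,complete_space}"
    and A0 :: "'v \<Rightarrow> 'v \<Rightarrow> real"
    and Ap :: "'np::finite \<Rightarrow> 'v \<Rightarrow> 'v \<Rightarrow> real"
    and \<kappa> \<mu> :: "real^'np"
    and \<kappa>t \<mu>t CP \<rho> \<zeta> T :: real
    and K :: nat
    and Qad :: "(real^'np) set"
    and Cop :: "'v \<Rightarrow> 'c::{real_inner,complete_space}"
    and c :: "'nc::finite \<Rightarrow> 'c"
    and y\<delta> :: "real \<Rightarrow> 'c"
    and l :: "real \<Rightarrow> 'v \<Rightarrow> real"
    and u0 u1 :: 'v
    and \<phi> :: "'nV::finite \<Rightarrow> 'v"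
    and \<Psi>V :: "real^'nr::finite^'nV"
    and \<Psi>Q :: "real^'nq::finite^'np"
    and MQ :: "real^'np^'np"
    and qr :: "real^'nq"
    and uh udh :: "nat \<Rightarrow> real^'nV"
    and ur udr :: "nat \<Rightarrow> real^'nr"
  assumes inj_emb: "bounded_linear \<iota>" "inj \<iota>"
    and J_lin: "bounded_linear Jop"
    and A0_bil: "bounded_bilinear A0" and A0_sym: "\<And>u v. A0 u v = A0 v u"
    and A0_nonneg: "\<And>v. 0 \<le> A0 v v"
    and Ap_bil: "\<And>p. bounded_bilinear (Ap p)" and Ap_sym: "\<And>p u v. Ap p u v = Ap p v u"
    and Ap_bounds: "\<And>p v. \<kappa> $ p * (norm (Jop v))\<^sup>2 \<le> Ap p v v \<and> Ap p v v \<le> \<mu> $ p * (norm (Jop v))\<^sup>2"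
    and \<kappa>_pos: "\<And>p. 0 < \<kappa> $ p" and \<mu>_pos: "\<And>p. 0 < \<mu> $ p"
    and \<kappa>t_pos: "0 < \<kappa>t" and \<mu>t_pos: "0 < \<mu>t"
    and CP_pos: "0 < CP" and poincare: "\<And>v. norm v \<le> CP * norm (Jop v)"
    and Qad_closed: "closed Qad" and Qad_convex: "convex Qad"
    and Qad_sub: "Qad \<subseteq> {q. (\<forall>p. 0 < q $ p) \<and> \<kappa>t \<le> q \<bullet> \<kappa> \<and> q \<bullet> \<mu> \<le> \<mu>t}"
    and \<rho>_pos: "0 < \<rho>"
    and \<zeta>_range: "1/2 \<le> \<zeta>" "\<zeta> \<le> 1"
    and T_pos: "0 < T" and K_pos: "0 < K"
    and C_lin: "bounded_linear Cop" and C_inj: "inj Cop"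
    and c_basis: "inj c" "independent (range c)"
    and l_lin: "\<And>t. bounded_linear (l t)"
    and \<phi>_basis: "inj \<phi>" "independent (range \<phi>)"
    and \<Psi>V_orth: "transpose \<Psi>V ** gram \<phi> ** \<Psi>V = mat 1"
    and MQ_spd: "transpose MQ = MQ" "\<And>x. x \<noteq> 0 \<Longrightarrow> 0 < x \<bullet> (MQ *v x)"
    and \<Psi>Q_orth: "transpose \<Psi>Q ** MQ ** \<Psi>Q = mat 1"
    and qr_adm: "\<Psi>Q *v qr \<in> Qad"
    and full_sol: "scheme_solution (gram (\<iota> \<circ> \<phi>)) (stiff (A_of A0 Ap (\<Psi>Q *v qr)) \<phi>)
                     (\<lambda>k. \<chi> j. l (real k * (T / real K)) (\<phi> j)) \<zeta> \<rho> (T / real K) K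
                     (\<chi> j. inner u0 (\<phi> j)) (\<chi> j. inner u1 (\<phi> j)) uh udh"
    and red_sol: "scheme_solution (transpose \<Psi>V ** gram (\<iota> \<circ> \<phi>) ** \<Psi>V)
                     (transpose \<Psi>V ** stiff (A_of A0 Ap (\<Psi>Q *v qr)) \<phi> ** \<Psi>V)
                     (\<lambda>k. transpose \<Psi>V *v (\<chi> j. l (real k * (T / real K)) (\<phi> j))) \<zeta> \<rho> (T / real K) K
                     (transpose \<Psi>V *v (\<chi> j. inner u0 (\<phi> j)))
                     (transpose \<Psi>V *v (\<chi> j. inner u1 (\<phi> j))) ur udr"
  shows
    "let dt = T / real K;
         Ah = stiff (A_of A0 Ap (\<Psi>Q *v qr)) \<phi>;
         yh = (\<lambda>k. obs_h c (y\<delta> (real k * dt)));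
         Jh = dt / 2 * (\<Sum>k=1..K. (norm (obs_h c (Cop (coef_to_elem \<phi> (uh k))) - yh k))\<^sup>2);
         Jr = dt / 2 * (\<Sum>k=1..K. (norm (obs_h c (Cop (coef_to_elem \<phi> (\<Psi>V *v ur k))) - yh k))\<^sup>2);
         e = (\<lambda>k. uh k - \<Psi>V *v ur k);
         \<Delta>u = sqrt (dt * (\<Sum>k=1..K. e k \<bullet> (Ah *v e k)));
         a = \<kappa>t / CP\<^sup>2
     in \<bar>Jh - Jr\<bar> \<le> (onorm Cop)\<^sup>2 / (2 * a) * \<Delta>u\<^sup>2 + onorm Cop * sqrt (2 * Jr / a) * \<Delta>u"
proof -
  define dt where "dt = T / real K"
  define af where "af = A_of A0 Ap (\<Psi>Q *v qr)"
  define a where "a = \<kappa>t / CP\<^sup>2"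
  define obs where "obs = (\<lambda>x. obs_h c (Cop (coef_to_elem \<phi> x)))"
  define e where "e = (\<lambda>k. uh k - \<Psi>V *v ur k)"
  define energy where "energy = (\<lambda>k. e k \<bullet> (stiff af \<phi> *v e k))"
  have "0 < dt" "0 < a"
    using T_pos K_pos \<kappa>t_pos CP_pos by (simp_all add: dt_def a_def)
  have q_adm: "(\<forall>p. 0 < (\<Psi>Q *v qr) $ p) \<and> \<kappa>t \<le> (\<Psi>Q *v qr) \<bullet> \<kappa>"
    using qr_adm Qad_sub by auto
  have coercive: "a * (norm v)\<^sup>2 \<le> af v v" for v
    unfolding a_def af_def
    using A0_nonneg Ap_bounds[THEN conjunct1] q_adm \<kappa>t_pos CP_pos poincare
    by (intro A_of_coercive) (auto intro: less_imp_le)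
  have energy_eq: "energy k = af (coef_to_elem \<phi> (e k)) (coef_to_elem \<phi> (e k))" for k
    unfolding energy_def af_def by (intro stiff_quadratic_form bilinear_A_of A0_bil Ap_bil)
  have "0 \<le> energy k" for k
    using coercive[of "coef_to_elem \<phi> (e k)"] \<open>0 < a\<close> energy_eq[of k]
    by (smt (verit) mult_nonneg_nonneg zero_le_power2)
  moreover have "(norm ((obs (uh k) - yh) - (obs (\<Psi>V *v ur k) - yh)))\<^sup>2
      \<le> (onorm Cop)\<^sup>2 / a * energy k" for k yh
  proof -
    have "obs (uh k) - obs (\<Psi>V *v ur k) = obs_h c (Cop (coef_to_elem \<phi> (e k)))"
      by (simp add: obs_def e_def linear_diff[OF linear_obs_h] linear_diff[OF linear_coef_to_elem]
          linear_diff[OF bounded_linear.linear[OF C_lin]])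
    then show ?thesis
      using obs_h_energy_estimate[OF c_basis C_lin \<open>0 < a\<close> coercive] energy_eq by simp
  qed
  ultimately have "\<bar>dt / 2 * (\<Sum>k=1..K. (norm (obs (uh k) - yh k))\<^sup>2)
        - dt / 2 * (\<Sum>k=1..K. (norm (obs (\<Psi>V *v ur k) - yh k))\<^sup>2)\<bar>
      \<le> (onorm Cop)\<^sup>2 / (2 * a) * (sqrt (dt * (\<Sum>k=1..K. energy k)))\<^sup>2
        + onorm Cop * sqrt (2 * (dt / 2 * (\<Sum>k=1..K. (norm (obs (\<Psi>V *v ur k) - yh k))\<^sup>2)) / a)
          * sqrt (dt * (\<Sum>k=1..K. energy k))" for yh
    by (intro discrete_misfit_diff_le \<open>0 < dt\<close> \<open>0 < a\<close> onorm_pos_le[OF C_lin])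
  then show ?thesis
    unfolding Let_def obs_def energy_def e_def af_def a_def dt_def .
qed

end
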